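(* Let $k\ge 2$ be an integer. If $G$ is a $(k+1)$-regular graph having a $k$-conversion set of size $k$, then the order of $G$ is at most $2k+2$. Moreover, for every $k\ge 2$ there exists a $(k+1)$-regular graph of order $2k+2$ which has a $k$-conversion set of size $k$.
   Context: For a graph $G=(V,E)$, a positive integer $k$ and a set $S_0\subseteq V$, the irreversible $k$-threshold conversion process is defined by: for $t=1,2,\dots$, $S_t$ is obtained from $S_{t-1}$ by adjoining all vertices having at least $k$ neighbours in $S_{t-1}$. The set $S_0$ is a $k$-conversion set of $G$ if $S_t=V(G)$ for some $t\ge 0$. *)

theory Defs
  imports Main
begin

definition simple_graph :: "'a set \<Rightarrow> ('a \<Rightarrow> 'a \<Rightarrow> bool) \<Rightarrow> bool" where
  "simple_graph V E \<longleftrightarrow> finite V \<and> (\<forall>x y. E x y \<longrightarrow> x \<in> V \<and> y \<in> V)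
     \<and> (\<forall>x y. E x y \<longrightarrow> E y x) \<and> (\<forall>x. \<not> E x x)"

definition neighbours :: "'a set \<Rightarrow> ('a \<Rightarrow> 'a \<Rightarrow> bool) \<Rightarrow> 'a \<Rightarrow> 'a set" where
  "neighbours V E v = {u \<in> V. E v u}"

definition regular :: "'a set \<Rightarrow> ('a \<Rightarrow> 'a \<Rightarrow> bool) \<Rightarrow> nat \<Rightarrow> bool" where
  "regular V E r \<longleftrightarrow> (\<forall>v \<in> V. card (neighbours V E v) = r)"

definition conv_step :: "'a set \<Rightarrow> ('a \<Rightarrow> 'a \<Rightarrow> bool) \<Rightarrow> nat \<Rightarrow> 'a set \<Rightarrow> 'a set" where
  "conv_step V E k S = S \<union> {v \<in> V. card (neighbours V E v \<inter> S) \<ge> k}"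

definition conversion_set :: "'a set \<Rightarrow> ('a \<Rightarrow> 'a \<Rightarrow> bool) \<Rightarrow> nat \<Rightarrow> 'a set \<Rightarrow> bool" where
  "conversion_set V E k S0 \<longleftrightarrow> S0 \<subseteq> V \<and> (\<exists>t. (conv_step V E k ^^ t) S0 = V)"

end

theory Submission
  imports Defs
begin

text \<open>Run the conversion process one vertex at a time and count ordered pairs of adjacent
  vertices inside the converted set: each newly converted vertex adds at least \<open>2k\<close> of them,
  and the last vertex of a \<open>(k+1)\<close>-regular graph adds \<open>2(k+1)\<close>. Comparing with the
  \<open>n(k+1)\<close> pairs of the whole graph, a conversion set of size \<open>k\<close> forces
  \<open>(n - 2)(k + 1) \<ge> 2k(n - k - 1)\<close>, i.e. \<open>n \<le> 2k + 2\<close>. The bound is attained by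
  the complete bipartite graph with sides of size \<open>k + 1\<close>, where \<open>k\<close> vertices of one side
  convert the other side and then the remaining vertex.\<close>

inductive spreads_to :: "'a set \<Rightarrow> ('a \<Rightarrow> 'a \<Rightarrow> bool) \<Rightarrow> nat \<Rightarrow> 'a set \<Rightarrow> 'a set \<Rightarrow> bool"
  for V E k S where
  refl: "spreads_to V E k S S"
| insert: "spreads_to V E k S A \<Longrightarrow> v \<in> V \<Longrightarrow> v \<notin> A \<Longrightarrow> k \<le> card (neighbours V E v \<inter> A)
    \<Longrightarrow> spreads_to V E k S (insert v A)"

lemma spreads_to_subset:
  assumes "spreads_to V E k S A" and "S \<subseteq> V"
  shows "A \<subseteq> V"
  using assms by induction auto

lemma spreads_to_union:
  assumes g: "simple_graph V E" and "finite C"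
    and C: "\<forall>v \<in> C. v \<in> V \<and> k \<le> card (neighbours V E v \<inter> A)"
    and A: "spreads_to V E k S A"
  shows "spreads_to V E k S (A \<union> C)"
  using \<open>finite C\<close> C
proof (induction C)
  case empty
  then show ?case using A by simp
next
  case (insert x C)
  then have IH: "spreads_to V E k S (A \<union> C)" by simp
  show ?case
  proof (cases "x \<in> A \<union> C")
    case True
    then show ?thesis using IH by (simp add: insert_absorb)
  next
    case False
    have "finite (neighbours V E x)"
      using g by (simp add: simple_graph_def neighbours_def)
    then have "card (neighbours V E x \<inter> A) \<le> card (neighbours V E x \<inter> (A \<union> C))"
      by (intro card_mono) auto
    with insert.prems have "spreads_to V E k S (insert x (A \<union> C))"
      using spreads_to.insert[OF IH _ False] by auto
    then show ?thesis by simp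
  qed
qed

lemma spreads_to_conv_step:
  assumes g: "simple_graph V E" and "spreads_to V E k S A"
  shows "spreads_to V E k S (conv_step V E k A)"
proof -
  have "finite {v \<in> V. k \<le> card (neighbours V E v \<inter> A)}"
    using g by (simp add: simple_graph_def)
  from spreads_to_union[OF g this _ assms(2)] show ?thesis
    unfolding conv_step_def by simp
qed

lemma conversion_set_spreads_to:
  assumes g: "simple_graph V E" and "conversion_set V E k S"
  shows "spreads_to V E k S V"
proof -
  have "spreads_to V E k S ((conv_step V E k ^^ t) S)" for t
    by (induction t) (auto intro: spreads_to.refl spreads_to_conv_step[OF g])
  then show ?thesis
    using assms(2) unfolding conversion_set_def by metis
qed

definition arcs_in :: "('a \<Rightarrow> 'a \<Rightarrow> bool) \<Rightarrow> 'a set \<Rightarrow> ('a \<times> 'a) set" where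
  "arcs_in E A = {(u, w). u \<in> A \<and> w \<in> A \<and> E u w}"

lemma finite_arcs_in: "finite A \<Longrightarrow> finite (arcs_in E A)"
  unfolding arcs_in_def by (rule finite_subset[of _ "A \<times> A"]) auto

lemma card_arcs_in_insert:
  assumes g: "simple_graph V E" and "v \<notin> A" and "A \<subseteq> V"
  shows "card (arcs_in E (insert v A)) = card (arcs_in E A) + 2 * card (neighbours V E v \<inter> A)"
proof -
  let ?N = "neighbours V E v \<inter> A"
  have "finite A"
    using g \<open>A \<subseteq> V\<close> finite_subset by (auto simp: simple_graph_def)
  have split: "arcs_in E (insert v A) = (arcs_in E A \<union> Pair v ` ?N) \<union> (\<lambda>u. (u, v)) ` ?N"
    using g \<open>A \<subseteq> V\<close> unfolding arcs_in_def neighbours_def simple_graph_def by auto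
  have "card (Pair v ` ?N) = card ?N" "card ((\<lambda>u. (u, v)) ` ?N) = card ?N"
    by (auto intro: card_image simp: inj_on_def)
  moreover have "arcs_in E A \<inter> Pair v ` ?N = {}"
    "(arcs_in E A \<union> Pair v ` ?N) \<inter> (\<lambda>u. (u, v)) ` ?N = {}"
    using \<open>v \<notin> A\<close> unfolding arcs_in_def by auto
  ultimately show ?thesis
    unfolding split using \<open>finite A\<close>
    by (simp add: card_Un_disjoint finite_arcs_in)
qed

lemma spreads_to_card_arcs_in:
  assumes "spreads_to V E k S A" and g: "simple_graph V E" and "S \<subseteq> V"
  shows "2 * k * card A \<le> card (arcs_in E A) + 2 * k * card S"
  using assms(1)
proof induction
  case refl
  then show ?case by simp
next
  case (insert A v)
  have "A \<subseteq> V"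
    using spreads_to_subset[OF insert.hyps(1) \<open>S \<subseteq> V\<close>] .
  with g have "finite A"
    by (auto simp: simple_graph_def finite_subset)
  then show ?case
    using card_arcs_in_insert[OF g \<open>v \<notin> A\<close> \<open>A \<subseteq> V\<close>] insert by (simp add: algebra_simps)
qed

lemma card_arcs_in_regular:
  assumes g: "simple_graph V E" and "regular V E r"
  shows "card (arcs_in E V) = card V * r"
proof -
  have "arcs_in E V = Sigma V (neighbours V E)"
    using g unfolding arcs_in_def neighbours_def simple_graph_def by auto
  then show ?thesis
    using assms by (simp add: card_SigmaI simple_graph_def regular_def neighbours_def)
qed

lemma regular_conversion_set_card_bound:
  assumes g: "simple_graph V E" and reg: "regular V E r"
    and conv: "conversion_set V E k S" and "S \<noteq> V"
  shows "2 * k * card V + 2 * r \<le> card V * r + 2 * k * (card S + 1)"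
proof -
  have "S \<subseteq> V"
    using conv by (simp add: conversion_set_def)
  obtain A v where A: "spreads_to V E k S A" and "v \<in> V" "v \<notin> A" and V: "V = insert v A"
    using conversion_set_spreads_to[OF g conv] \<open>S \<noteq> V\<close>
    by (cases rule: spreads_to.cases) auto
  have "A \<subseteq> V" "finite A"
    using V g by (auto simp: simple_graph_def finite_subset)
  have "neighbours V E v \<inter> A = neighbours V E v"
    using g V unfolding neighbours_def simple_graph_def by auto
  then have "card (arcs_in E V) = card (arcs_in E A) + 2 * r"
    using card_arcs_in_insert[OF g \<open>v \<notin> A\<close> \<open>A \<subseteq> V\<close>] reg \<open>v \<in> V\<close> V
    by (simp add: regular_def)
  moreover have "card V = card A + 1"
    using V \<open>v \<notin> A\<close> \<open>finite A\<close> by simp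
  ultimately show ?thesis
    using spreads_to_card_arcs_in[OF A g \<open>S \<subseteq> V\<close>] card_arcs_in_regular[OF g reg]
    by (simp add: algebra_simps)
qed

definition balanced_biclique :: "nat \<Rightarrow> nat \<Rightarrow> nat \<Rightarrow> bool" where
  "balanced_biclique n i j \<longleftrightarrow> i < 2 * n \<and> j < 2 * n \<and> (i < n) \<noteq> (j < n)"

lemma simple_graph_balanced_biclique: "simple_graph {0..<2 * n} (balanced_biclique n)"
  unfolding simple_graph_def balanced_biclique_def by auto

lemma neighbours_balanced_biclique:
  "i < n \<Longrightarrow> neighbours {0..<2 * n} (balanced_biclique n) i = {n..<2 * n}"
  "n \<le> i \<Longrightarrow> i < 2 * n \<Longrightarrow> neighbours {0..<2 * n} (balanced_biclique n) i = {0..<n}"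
  unfolding neighbours_def balanced_biclique_def by auto

lemma regular_balanced_biclique: "regular {0..<2 * n} (balanced_biclique n) n"
  unfolding regular_def
proof
  fix i assume "i \<in> {0..<2 * n}"
  then show "card (neighbours {0..<2 * n} (balanced_biclique n) i) = n"
    by (cases "i < n") (simp_all add: neighbours_balanced_biclique)
qed

lemma conversion_set_balanced_biclique:
  "conversion_set {0..<2 * (k + 1)} (balanced_biclique (k + 1)) k {0..<k}"
proof -
  let ?V = "{0..<2 * (k + 1)}" and ?E = "balanced_biclique (k + 1)"
  let ?S1 = "conv_step ?V ?E k {0..<k}"
  have S1: "?V - {k} \<subseteq> ?S1"
  proof
    fix v assume v: "v \<in> ?V - {k}"
    show "v \<in> ?S1"
    proof (cases "v < k")
      case False
      with v have "neighbours ?V ?E v \<inter> {0..<k} = {0..<k}"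
        using neighbours_balanced_biclique(2)[of "k + 1" v] by auto
      with v show ?thesis by (simp add: conv_step_def)
    qed (simp add: conv_step_def)
  qed
  then have "neighbours ?V ?E k \<inter> ?S1 = {k + 1..<2 * (k + 1)}"
    using neighbours_balanced_biclique(1)[of k "k + 1"] by auto
  then have "?V \<subseteq> conv_step ?V ?E k ?S1"
    using S1 by (auto simp: conv_step_def)
  moreover have "conv_step ?V ?E k ?S1 \<subseteq> ?V"
    by (auto simp: conv_step_def)
  ultimately have "(conv_step ?V ?E k ^^ 2) {0..<k} = ?V"
    by (simp add: numeral_2_eq_2)
  then show ?thesis
    unfolding conversion_set_def by auto
qed

theorem proposition3p2:
  fixes k :: nat
  assumes "k \<ge> 2"
  shows "(\<forall>(V :: 'a set) E S. simple_graph V E \<longrightarrow> regular V E (k + 1)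
            \<longrightarrow> conversion_set V E k S \<longrightarrow> card S = k \<longrightarrow> card V \<le> 2 * k + 2)
       \<and> (\<exists>(V :: nat set) E S. simple_graph V E \<and> regular V E (k + 1) \<and> card V = 2 * k + 2
            \<and> conversion_set V E k S \<and> card S = k)"
proof
  show "\<forall>(V :: 'a set) E S. simple_graph V E \<longrightarrow> regular V E (k + 1)
          \<longrightarrow> conversion_set V E k S \<longrightarrow> card S = k \<longrightarrow> card V \<le> 2 * k + 2"
  proof (intro allI impI)
    fix V :: "'a set" and E S
    assume g: "simple_graph V E" and reg: "regular V E (k + 1)"
      and conv: "conversion_set V E k S" and "card S = k"
    show "card V \<le> 2 * k + 2"
    proof (cases "S = V")
      case False
      define m where "m = k - 1"
      have k: "k = m + 1" and "m > 0"
        using \<open>k \<ge> 2\<close> by (simp_all add: m_def)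
      from regular_conversion_set_card_bound[OF g reg conv False] \<open>card S = k\<close>
      have "m * card V \<le> m * (2 * k + 2)"
        unfolding k by (simp add: algebra_simps)
      then show ?thesis
        using \<open>m > 0\<close> by (simp only: mult_le_cancel1)
    qed (use \<open>card S = k\<close> in simp)
  qed
  show "\<exists>(V :: nat set) E S. simple_graph V E \<and> regular V E (k + 1) \<and> card V = 2 * k + 2
          \<and> conversion_set V E k S \<and> card S = k"
    using simple_graph_balanced_biclique regular_balanced_biclique
      conversion_set_balanced_biclique by fastforce
qed

end
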